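(* Let $p$ be a prime and $D$ an integer with $1 \le D \le p-1$. Let $k\ge1$, let $A_1,\dots,A_k\subseteq\mathbb{Z}_p$ be $D$-APs, and let $g_0,g_1\in\mathbb{Z}_p$. If $\mathrm{dist}_{p,D}(g_0,g_1) \ge \big|\sum_{i=1}^k A_i\big|$, then $g_0$ and $g_1$ are not both elements of $\sum_{i=1}^k A_i$.
   Context: $\mathbb{Z}_p=\{0,\dots,p-1\}$ under addition mod $p$. Sumset: $\sum_{i=1}^k A_i=\{a_1+\dots+a_k\bmod p : a_i\in A_i\}$. For $b\in\{0,\dots,D-1\}$, the $D$-AP with base $b$ is $A_{(b)}=\{b+iD : i\text{ integer},\ 0\le i\le\lfloor (p-1-b)/D\rfloor\}\subseteq\mathbb{Z}_p$; a $D$-AP is any set of this form. For $g_0,g_1\in\mathbb{Z}_p$, $\mathrm{dist}_{p,D}(g_0,g_1)=\min\{(g_1-g_0)D^{-1}\bmod p,\ (g_0-g_1)D^{-1}\bmod p\}$, with each term viewed as an integer in $\{0,\dots,p-1\}$ and $D^{-1}$ the inverse of $D$ mod $p$. *)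

theory Defs
  imports "HOL-Number_Theory.Number_Theory"
begin

text \<open>Elements of Z_p are represented by naturals in {0..<p}.\<close>

definition D_AP_base :: "nat \<Rightarrow> nat \<Rightarrow> nat \<Rightarrow> nat set" where
  "D_AP_base p D b = {b + i * D | i. i \<le> (p - 1 - b) div D}"

definition is_D_AP :: "nat \<Rightarrow> nat \<Rightarrow> nat set \<Rightarrow> bool" where
  "is_D_AP p D A \<longleftrightarrow> (\<exists>b < D. A = D_AP_base p D b)"

definition sumset :: "nat \<Rightarrow> nat \<Rightarrow> (nat \<Rightarrow> nat set) \<Rightarrow> nat set" where
  "sumset p k A = {(\<Sum>i=1..k. a i) mod p | a. \<forall>i\<in>{1..k}. a i \<in> A i}"

definition inv_modp :: "nat \<Rightarrow> nat \<Rightarrow> int" where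
  "inv_modp p D = (THE x. 0 \<le> x \<and> x < int p \<and> [int D * x = 1] (mod int p))"

definition dist_pD :: "nat \<Rightarrow> nat \<Rightarrow> nat \<Rightarrow> nat \<Rightarrow> int" where
  "dist_pD p D g0 g1 =
     min (((int g1 - int g0) * inv_modp p D) mod int p)
         (((int g0 - int g1) * inv_modp p D) mod int p)"

end

theory Submission
  imports Defs
begin

text \<open>
  A sum of \<open>D\<close>-APs with bases \<open>b\<^sub>i\<close> and lengths \<open>n\<^sub>i + 1\<close> is the image of the integer
  interval \<open>{0..\<Sum> n\<^sub>i}\<close> under \<open>J \<mapsto> \<Sum> b\<^sub>i + J D mod p\<close>. If \<open>g\<^sub>0, g\<^sub>1\<close> have indices
  \<open>J\<^sub>0 \<le> J\<^sub>1\<close>, multiplying \<open>g\<^sub>1 - g\<^sub>0\<close> by \<open>D\<^sup>-\<^sup>1\<close> gives \<open>J\<^sub>1 - J\<^sub>0 mod p\<close>, so the distance is at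
  most \<open>min (J\<^sub>1 - J\<^sub>0) (p - 1)\<close>. On the other hand \<open>J \<mapsto> J D mod p\<close> is injective on windows
  of length \<open>p\<close>, so the sumset contains at least \<open>min (J\<^sub>1 - J\<^sub>0) (p - 1) + 1\<close> elements.
\<close>

lemma inv_modp_cong:
  assumes "coprime D p" "p > 0"
  shows "[int D * inv_modp p D = 1] (mod int p)"
proof -
  have cop: "coprime (int D) (int p)" using assms(1) by simp
  obtain x where x: "[int D * x = 1] (mod int p)"
    using cong_solve_coprime_int[OF cop] by blast
  let ?P = "\<lambda>y. 0 \<le> y \<and> y < int p \<and> [int D * y = 1] (mod int p)"
  have ex: "?P (x mod int p)"
    using assms(2) x by (metis cong_def mod_mult_right_eq of_nat_0_less_iff pos_mod_bound pos_mod_sign)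
  have "y = x mod int p" if "?P y" for y
  proof -
    have "[int D * y = int D * (x mod int p)] (mod int p)"
      using that ex by (meson cong_sym cong_trans)
    hence "[y = x mod int p] (mod int p)" using cop by (simp add: cong_mult_lcancel)
    thus ?thesis using that ex cong_less_imp_eq_int by blast
  qed
  hence "?P (inv_modp p D)"
    unfolding inv_modp_def using ex by (rule theI[of ?P, rotated])
  thus ?thesis by blast
qed

lemma dist_pD_commute: "dist_pD p D g0 g1 = dist_pD p D g1 g0"
  by (simp add: dist_pD_def min.commute)

lemma inv_modp_mult_progression_diff:
  assumes "coprime D p" "p > 0" "J0 \<le> J1"
  shows "((int ((B + J1 * D) mod p) - int ((B + J0 * D) mod p)) * inv_modp p D) mod int p
           = int ((J1 - J0) mod p)"
proof -
  have "[int ((B + J1 * D) mod p) - int ((B + J0 * D) mod p)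
          = (int B + int J1 * int D) - (int B + int J0 * int D)] (mod int p)"
    by (intro cong_diff) (simp_all add: cong_def zmod_int)
  hence "[int ((B + J1 * D) mod p) - int ((B + J0 * D) mod p) = int (J1 - J0) * int D] (mod int p)"
    using assms(3) by (simp add: of_nat_diff algebra_simps)
  hence "[(int ((B + J1 * D) mod p) - int ((B + J0 * D) mod p)) * inv_modp p D
          = int (J1 - J0) * (int D * inv_modp p D)] (mod int p)"
    by (metis cong_scalar_right mult.assoc)
  also have "[int (J1 - J0) * (int D * inv_modp p D) = int (J1 - J0) * 1] (mod int p)"
    by (intro cong_scalar_left inv_modp_cong assms(1,2))
  finally show ?thesis by (simp add: cong_def zmod_int)
qed

lemma inj_on_mod_progression:
  fixes B D p :: nat
  assumes "coprime D p"
  shows "inj_on (\<lambda>J. (B + J * D) mod p) {J0..<J0 + p}"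
proof (rule inj_onI)
  fix x y assume x: "x \<in> {J0..<J0 + p}" and y: "y \<in> {J0..<J0 + p}"
    and eq: "(B + x * D) mod p = (B + y * D) mod p"
  have "[B + x * D = B + y * D] (mod p)" using eq by (simp add: cong_def)
  hence "[x * D = y * D] (mod p)" by (simp add: cong_add_lcancel_nat)
  hence "[x = y] (mod p)"
    using assms by (simp add: cong_mult_rcancel_nat)
  moreover obtain u v where "x = J0 + u" "y = J0 + v" "u < p" "v < p"
    using x y by (metis atLeastLessThan_iff le_add_diff_inverse add_less_cancel_left)
  ultimately show "x = y" by (simp add: cong_add_lcancel_nat cong_less_modulus_unique_nat)
qed

lemma exists_bounded_summands:
  fixes n :: "'a \<Rightarrow> nat"
  assumes "finite I" "J \<le> sum n I"
  shows "\<exists>j. (\<forall>i\<in>I. j i \<le> n i) \<and> sum j I = J"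
  using assms
proof (induction I arbitrary: J rule: finite_induct)
  case empty
  thus ?case by auto
next
  case (insert i I)
  show ?case
  proof (cases "J \<le> sum n I")
    case True
    then obtain j where j: "\<forall>i\<in>I. j i \<le> n i" "sum j I = J" using insert by blast
    have "sum (j(i := 0)) I = sum j I" using insert(2) by (intro sum.cong) auto
    thus ?thesis using j insert(1,2) by (intro exI[of _ "j(i := 0)"]) auto
  next
    case False
    have "sum (n(i := J - sum n I)) I = sum n I" using insert(2) by (intro sum.cong) auto
    thus ?thesis using False insert by (intro exI[of _ "n(i := J - sum n I)"]) auto
  qed
qed

lemma mem_D_AP_base: "x \<in> D_AP_base p D b \<longleftrightarrow> (\<exists>j \<le> (p - 1 - b) div D. x = b + j * D)"
  by (auto simp: D_AP_base_def)

lemma sumset_D_AP_base: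
  assumes "\<forall>i\<in>{1..k}. A i = D_AP_base p D (b i)"
  shows "sumset p k A = (\<lambda>J. ((\<Sum>i=1..k. b i) + J * D) mod p) ` {..\<Sum>i=1..k. (p - 1 - b i) div D}"
    (is "_ = ?f ` {..?N}")
proof (intro equalityI subsetI)
  fix g assume "g \<in> sumset p k A"
  then obtain a where a: "g = (\<Sum>i=1..k. a i) mod p" "\<forall>i\<in>{1..k}. a i \<in> A i"
    unfolding sumset_def by blast
  then obtain j where j: "\<forall>i\<in>{1..k}. j i \<le> (p - 1 - b i) div D \<and> a i = b i + j i * D"
    using assms by (simp add: mem_D_AP_base) metis
  have "(\<Sum>i=1..k. a i) = (\<Sum>i=1..k. b i + j i * D)" using j by (intro sum.cong) auto
  hence "g = ?f (\<Sum>i=1..k. j i)" using a(1) by (simp add: sum.distrib sum_distrib_right)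
  moreover have "(\<Sum>i=1..k. j i) \<le> ?N" using j by (intro sum_mono) auto
  ultimately show "g \<in> ?f ` {..?N}" by blast
next
  fix g assume "g \<in> ?f ` {..?N}"
  then obtain J where J: "J \<le> ?N" "g = ?f J" by blast
  then obtain j where j: "\<forall>i\<in>{1..k}. j i \<le> (p - 1 - b i) div D" "(\<Sum>i=1..k. j i) = J"
    using exists_bounded_summands[of "{1..k}" J] by auto
  have "\<forall>i\<in>{1..k}. b i + j i * D \<in> A i" using assms j(1) by (auto simp: mem_D_AP_base)
  moreover have "g = (\<Sum>i=1..k. b i + j i * D) mod p"
    using J(2) j(2) by (simp add: sum.distrib sum_distrib_right[symmetric])
  ultimately show "g \<in> sumset p k A" unfolding sumset_def by blast
qed

lemma dist_pD_mod_progression_less_card: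
  assumes "coprime D p" "p > 0" "J0 \<le> N" "J1 \<le> N"
  shows "dist_pD p D ((B + J0 * D) mod p) ((B + J1 * D) mod p)
           < int (card ((\<lambda>J. (B + J * D) mod p) ` {..N}))"
  using assms(3,4)
proof (induction J0 J1 rule: linorder_wlog)
  case (sym J0 J1)
  thus ?case by (simp add: dist_pD_commute)
next
  case (le J0 J1)
  let ?f = "\<lambda>J. (B + J * D) mod p"
  define m where "m = min (J1 - J0) (p - 1)"
  have "dist_pD p D (?f J0) (?f J1) \<le> int ((J1 - J0) mod p)"
    unfolding dist_pD_def using inv_modp_mult_progression_diff[OF assms(1,2) le(1)] by simp
  moreover have "(J1 - J0) mod p \<le> m"
    unfolding m_def using mod_less_divisor[OF assms(2), of "J1 - J0"] by (simp add: mod_less_eq_dividend)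
  moreover have "inj_on ?f {J0..J0 + m}"
    by (rule inj_on_subset[OF inj_on_mod_progression[OF assms(1)]]) (use assms(2) m_def in auto)
  hence "m + 1 = card (?f ` {J0..J0 + m})" by (simp add: card_image)
  moreover have "\<dots> \<le> card (?f ` {..N})"
    using le m_def by (intro card_mono image_mono) auto
  ultimately show ?case by linarith
qed

theorem corollary2p7:
  fixes p D k g0 g1 :: nat and A :: "nat \<Rightarrow> nat set"
  assumes "prime p"
    and "1 \<le> D" and "D \<le> p - 1"
    and "k \<ge> 1"
    and "\<forall>i\<in>{1..k}. is_D_AP p D (A i)"
    and "g0 < p" and "g1 < p"
    and "dist_pD p D g0 g1 \<ge> int (card (sumset p k A))"
  shows "\<not> (g0 \<in> sumset p k A \<and> g1 \<in> sumset p k A)"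
proof
  assume both: "g0 \<in> sumset p k A \<and> g1 \<in> sumset p k A"
  have p0: "p > 0" using assms(1) prime_gt_0_nat by blast
  have "\<not> p dvd D" using assms(2,3) p0 by (auto dest: dvd_imp_le)
  hence "coprime D p" using assms(1) prime_imp_coprime coprime_commute by blast
  obtain b where "\<forall>i\<in>{1..k}. A i = D_AP_base p D (b i)"
    using assms(5) unfolding is_D_AP_def by metis
  note S = sumset_D_AP_base[OF this]
  obtain J0 J1 where "J0 \<le> (\<Sum>i=1..k. (p - 1 - b i) div D)" "g0 = ((\<Sum>i=1..k. b i) + J0 * D) mod p"
    and "J1 \<le> (\<Sum>i=1..k. (p - 1 - b i) div D)" "g1 = ((\<Sum>i=1..k. b i) + J1 * D) mod p"
    using both unfolding S by blast
  with dist_pD_mod_progression_less_card[OF \<open>coprime D p\<close> p0]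
  have "dist_pD p D g0 g1 < int (card (sumset p k A))" unfolding S by blast
  with assms(8) show False by simp
qed

end
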